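(* Let $G$ be a group and $\mathcal{B}_1,\mathcal{B}_2:G\to G$ maps, and let $a\circ b=\mathcal{B}_1(a)b\mathcal{B}_2(a)$. The following are equivalent: (i) $(G,\mathcal{B}_1,\mathcal{B}_2)$ is a Rota-Baxter system of groups; (ii) $\circ$ is associative and $\mathcal{B}_1$ is a semigroup homomorphism from $(G,\circ)$ to $(G,\cdot)$; (iii) $\circ$ is associative and $\mathcal{B}_2$ is a semigroup anti-homomorphism from $(G,\circ)$ to $(G,\cdot)$, i.e. $\mathcal{B}_2(a\circ b)=\mathcal{B}_2(b)\mathcal{B}_2(a)$.
   Context: A Rota-Baxter system of groups is a triple $(G,\mathcal{B}_1,\mathcal{B}_2)$ where $G$ is a group and $\mathcal{B}_1,\mathcal{B}_2:G\to G$ are maps such that for all $a,b\in G$: $\mathcal{B}_1(a)\mathcal{B}_1(b)=\mathcal{B}_1(\mathcal{B}_1(a)b\mathcal{B}_2(a))$ and $\mathcal{B}_2(b)\mathcal{B}_2(a)=\mathcal{B}_2(\mathcal{B}_1(a)b\mathcal{B}_2(a))$. *)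

theory Defs
  imports "HOL-Algebra.Group"
begin

definition rb_system :: "('g, 'b) monoid_scheme \<Rightarrow> ('g \<Rightarrow> 'g) \<Rightarrow> ('g \<Rightarrow> 'g) \<Rightarrow> bool" where
  "rb_system G B1 B2 \<longleftrightarrow> group G \<and> B1 \<in> carrier G \<rightarrow> carrier G \<and> B2 \<in> carrier G \<rightarrow> carrier G \<and>
     (\<forall>a\<in>carrier G. \<forall>b\<in>carrier G.
        B1 a \<otimes>\<^bsub>G\<^esub> B1 b = B1 (B1 a \<otimes>\<^bsub>G\<^esub> b \<otimes>\<^bsub>G\<^esub> B2 a) \<and>
        B2 b \<otimes>\<^bsub>G\<^esub> B2 a = B2 (B1 a \<otimes>\<^bsub>G\<^esub> b \<otimes>\<^bsub>G\<^esub> B2 a))"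

definition rb_circ :: "('g, 'b) monoid_scheme \<Rightarrow> ('g \<Rightarrow> 'g) \<Rightarrow> ('g \<Rightarrow> 'g) \<Rightarrow> 'g \<Rightarrow> 'g \<Rightarrow> 'g" where
  "rb_circ G B1 B2 a b = B1 a \<otimes>\<^bsub>G\<^esub> b \<otimes>\<^bsub>G\<^esub> B2 a"

end

theory Submission
  imports Defs
begin

text \<open>Both sides of the associativity law of \<open>\<circ>\<close> have the shape \<open>x c y\<close>:
  \<open>(a \<circ> b) \<circ> c = B1(a \<circ> b) c B2(a \<circ> b)\<close> and \<open>a \<circ> (b \<circ> c) = B1(a) B1(b) c B2(b) B2(a)\<close>.
  The two Rota-Baxter identities say precisely that the outer factors agree, so they imply
  associativity. Conversely, associativity at \<open>c = 1\<close> gives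
  \<open>B1(a \<circ> b) B2(a \<circ> b) = B1(a) B1(b) B2(b) B2(a)\<close>, and then either identity yields the other
  by cancellation in \<open>G\<close>.\<close>

context group
begin

lemma rb_circ_closed:
  assumes "B1 \<in> carrier G \<rightarrow> carrier G" "B2 \<in> carrier G \<rightarrow> carrier G"
    and "a \<in> carrier G" "b \<in> carrier G"
  shows "rb_circ G B1 B2 a b \<in> carrier G"
  using assms by (auto simp: rb_circ_def)

lemma rb_system_iff_circ:
  assumes "B1 \<in> carrier G \<rightarrow> carrier G" "B2 \<in> carrier G \<rightarrow> carrier G"
  shows "rb_system G B1 B2 \<longleftrightarrow> (\<forall>a\<in>carrier G. \<forall>b\<in>carrier G.
           B1 (rb_circ G B1 B2 a b) = B1 a \<otimes> B1 b \<and> B2 (rb_circ G B1 B2 a b) = B2 b \<otimes> B2 a)"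
  using assms group_axioms by (auto simp: rb_system_def rb_circ_def)

lemma rb_circ_assoc_expand:
  assumes B1: "B1 \<in> carrier G \<rightarrow> carrier G" and B2: "B2 \<in> carrier G \<rightarrow> carrier G"
    and a: "a \<in> carrier G" and b: "b \<in> carrier G" and c: "c \<in> carrier G"
  shows "rb_circ G B1 B2 (rb_circ G B1 B2 a b) c
           = B1 (rb_circ G B1 B2 a b) \<otimes> c \<otimes> B2 (rb_circ G B1 B2 a b)"
    and "rb_circ G B1 B2 a (rb_circ G B1 B2 b c) = (B1 a \<otimes> B1 b) \<otimes> c \<otimes> (B2 b \<otimes> B2 a)"
  using assms by (auto simp: rb_circ_def m_assoc Pi_def)

lemma rb_circ_assoc_if_hom:
  assumes "B1 \<in> carrier G \<rightarrow> carrier G" "B2 \<in> carrier G \<rightarrow> carrier G"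
    and "a \<in> carrier G" "b \<in> carrier G" "c \<in> carrier G"
    and "B1 (rb_circ G B1 B2 a b) = B1 a \<otimes> B1 b"
    and "B2 (rb_circ G B1 B2 a b) = B2 b \<otimes> B2 a"
  shows "rb_circ G B1 B2 (rb_circ G B1 B2 a b) c = rb_circ G B1 B2 a (rb_circ G B1 B2 b c)"
  using rb_circ_assoc_expand[OF assms(1-5)] assms(6,7) by simp

lemma rb_circ_assoc_one_imp_product:
  assumes B1: "B1 \<in> carrier G \<rightarrow> carrier G" and B2: "B2 \<in> carrier G \<rightarrow> carrier G"
    and a: "a \<in> carrier G" and b: "b \<in> carrier G"
    and assoc: "rb_circ G B1 B2 (rb_circ G B1 B2 a b) \<one> = rb_circ G B1 B2 a (rb_circ G B1 B2 b \<one>)"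
  shows "B1 (rb_circ G B1 B2 a b) \<otimes> B2 (rb_circ G B1 B2 a b) = (B1 a \<otimes> B1 b) \<otimes> (B2 b \<otimes> B2 a)"
  using assoc rb_circ_assoc_expand[OF B1 B2 a b one_closed]
    rb_circ_closed[OF B1 B2 a b] B1 B2 a b by (simp add: Pi_def)

lemma rb_anti_hom_if_hom:
  assumes "B1 \<in> carrier G \<rightarrow> carrier G" "B2 \<in> carrier G \<rightarrow> carrier G"
    and "a \<in> carrier G" "b \<in> carrier G"
    and "rb_circ G B1 B2 (rb_circ G B1 B2 a b) \<one> = rb_circ G B1 B2 a (rb_circ G B1 B2 b \<one>)"
    and "B1 (rb_circ G B1 B2 a b) = B1 a \<otimes> B1 b"
  shows "B2 (rb_circ G B1 B2 a b) = B2 b \<otimes> B2 a"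
  using rb_circ_assoc_one_imp_product[OF assms(1-5)] assms rb_circ_closed[OF assms(1-4)]
  by (simp add: Pi_def)

lemma rb_hom_if_anti_hom:
  assumes "B1 \<in> carrier G \<rightarrow> carrier G" "B2 \<in> carrier G \<rightarrow> carrier G"
    and "a \<in> carrier G" "b \<in> carrier G"
    and "rb_circ G B1 B2 (rb_circ G B1 B2 a b) \<one> = rb_circ G B1 B2 a (rb_circ G B1 B2 b \<one>)"
    and "B2 (rb_circ G B1 B2 a b) = B2 b \<otimes> B2 a"
  shows "B1 (rb_circ G B1 B2 a b) = B1 a \<otimes> B1 b"
  using rb_circ_assoc_one_imp_product[OF assms(1-5)] assms rb_circ_closed[OF assms(1-4)]
  by (simp add: Pi_def)

end

theorem proposition3p2:
  fixes G (structure) and B1 B2 :: "'g \<Rightarrow> 'g"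
  assumes "group G"
    and "B1 \<in> carrier G \<rightarrow> carrier G" and "B2 \<in> carrier G \<rightarrow> carrier G"
  defines "circ \<equiv> rb_circ G B1 B2"
  shows "(rb_system G B1 B2
           \<longleftrightarrow> ((\<forall>a\<in>carrier G. \<forall>b\<in>carrier G. \<forall>c\<in>carrier G. circ (circ a b) c = circ a (circ b c))
               \<and> (\<forall>a\<in>carrier G. \<forall>b\<in>carrier G. B1 (circ a b) = B1 a \<otimes> B1 b)))
       \<and> (rb_system G B1 B2
           \<longleftrightarrow> ((\<forall>a\<in>carrier G. \<forall>b\<in>carrier G. \<forall>c\<in>carrier G. circ (circ a b) c = circ a (circ b c))
               \<and> (\<forall>a\<in>carrier G. \<forall>b\<in>carrier G. B2 (circ a b) = B2 b \<otimes> B2 a)))"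
proof -
  interpret group G by fact
  note maps = assms(2,3)
  let ?assoc = "\<forall>a\<in>carrier G. \<forall>b\<in>carrier G. \<forall>c\<in>carrier G. circ (circ a b) c = circ a (circ b c)"
  have system_imp_assoc: ?assoc if "rb_system G B1 B2"
    using that rb_circ_assoc_if_hom[OF maps] unfolding circ_def rb_system_iff_circ[OF maps] by blast
  have "rb_system G B1 B2" if ?assoc "\<forall>a\<in>carrier G. \<forall>b\<in>carrier G. B1 (circ a b) = B1 a \<otimes> B1 b"
    using that rb_anti_hom_if_hom[OF maps] unfolding circ_def rb_system_iff_circ[OF maps] by blast
  moreover have "rb_system G B1 B2" if ?assoc "\<forall>a\<in>carrier G. \<forall>b\<in>carrier G. B2 (circ a b) = B2 b \<otimes> B2 a"
    using that rb_hom_if_anti_hom[OF maps] unfolding circ_def rb_system_iff_circ[OF maps] by blast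
  ultimately show ?thesis
    using system_imp_assoc unfolding circ_def rb_system_iff_circ[OF maps] by blast
qed

end
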